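(* Let $q$ be a power of $2$. For $i=1,\dots,k$, let $b_i,\delta\in\mathbb{F}_q^*$ and let $s_i$ be positive integers. Then the polynomial $$P(x)=\sum_{i=1}^k b_i(x^q+x+\delta)^{s_i}+x$$ is an involution over $\mathbb{F}_{q^2}$.
   Context: A polynomial $P$ is an involution over $\mathbb{F}_{q^2}$ if it is a permutation polynomial of $\mathbb{F}_{q^2}$ equal to its own compositional inverse, i.e. $P(P(c))=c$ for all $c\in\mathbb{F}_{q^2}$. *)

theory Defs
  imports Main
begin

definition involution_on :: "'a set \<Rightarrow> ('a \<Rightarrow> 'a) \<Rightarrow> bool" where
  "involution_on S P \<longleftrightarrow> bij_betw P S S \<and> (\<forall>c\<in>S. P (P c) = c)"

end

theory Submission
  imports Defs "HOL-Computational_Algebra.Primes"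
begin

text \<open>
  Write \<open>P x = h (T x) + x\<close> with \<open>T x = x\<^sup>q + x + \<delta>\<close> and
  \<open>h y = \<Sum>i. b\<^sub>i y\<^bsup>s\<^sub>i\<^esup>\<close>. The Frobenius map \<open>x \<mapsto> x\<^sup>q\<close>
  is an additive involution of the field with \<open>q\<^sup>2\<close> elements, with fixed field \<open>\<bbbF>\<^sub>q\<close>.
  Hence \<open>T\<close> takes values in \<open>\<bbbF>\<^sub>q\<close>, so does \<open>h \<circ> T\<close>, and adding an
  element \<open>z\<close> of \<open>\<bbbF>\<^sub>q\<close> to \<open>x\<close> changes \<open>T x\<close> by \<open>z\<^sup>q + z = 2 z = 0\<close>.
  Thus \<open>T (P x) = T x\<close>, and \<open>P (P x) = x + 2 h (T x) = x\<close>.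
\<close>

lemma involution_on_UNIV_iff: "involution_on UNIV f \<longleftrightarrow> (\<forall>x. f (f x) = x)"
  unfolding involution_on_def using involuntory_imp_bij by blast

lemma involution_on_add_of_invariant:
  fixes T h :: "'a::ring_1 \<Rightarrow> 'a"
  assumes "CHAR('a) = 2" and invariant: "\<And>x. T (h (T x) + x) = T x"
  shows "involution_on UNIV (\<lambda>x. h (T x) + x)"
proof -
  have "h (T x) + h (T x) = 0" for x
    using uminus_CHAR_2[OF \<open>CHAR('a) = 2\<close>] by (metis add.right_inverse)
  then show ?thesis
    unfolding involution_on_UNIV_iff by (simp add: invariant add.assoc[symmetric])
qed

lemma power_card_UNIV_eq_self:
  fixes x :: "'a::{field,finite}"
  shows "x ^ card (UNIV :: 'a set) = x"
proof (cases "x = 0")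
  case True
  then show ?thesis by (simp add: finite_UNIV_card_ge_0)
next
  case False
  have card: "Suc (card (UNIV :: 'a set) - 1) = card (UNIV :: 'a set)"
    using finite_UNIV_card_ge_0[where 'a='a] by simp
  have "(\<Prod>y\<in>UNIV-{0}. x * y) = (\<Prod>y\<in>UNIV-{0}. y)"
    by (rule prod.reindex_bij_witness[of _ "\<lambda>y. y / x" "\<lambda>y. x * y"]) (use False in auto)
  then have "x ^ (card (UNIV :: 'a set) - 1) * \<Prod>(UNIV-{0}) = \<Prod>(UNIV-{0::'a})"
    by (simp add: prod.distrib card_Diff_singleton)
  then have "x ^ (card (UNIV :: 'a set) - 1) = 1"
    by simp
  then show ?thesis
    by (metis card mult.right_neutral power_Suc)
qed

lemma CHAR_eq_2_if_card_eq_2_power: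
  assumes "card (UNIV :: 'a::{field,finite} set) = 2 ^ n"
  shows "CHAR('a) = 2"
proof (rule CHAR_eq_posI)
  have "n \<noteq> 0"
  proof
    assume "n = 0"
    then have "card (UNIV :: 'a set) = 1" using assms by simp
    then show False
      by (metis card_1_singletonE iso_tuple_UNIV_I singletonD zero_neq_one)
  qed
  then have "(-1 :: 'a) ^ card (UNIV :: 'a set) = 1"
    using assms by simp
  then have "(-1 :: 'a) = 1"
    using power_card_UNIV_eq_self by metis
  then show "of_nat 2 = (0::'a)"
    by (metis add.right_inverse of_nat_1 of_nat_add one_add_one)
qed (auto dest: less_2_cases)

lemma sum_mult_power_fixed_by_frobenius:
  fixes b :: "'b \<Rightarrow> 'a::comm_semiring_1"
  assumes "prime CHAR('a)" and "q = CHAR('a) ^ n"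
    and "\<And>i. i \<in> A \<Longrightarrow> b i ^ q = b i" and "y ^ q = y"
  shows "(\<Sum>i\<in>A. b i * y ^ s i) ^ q = (\<Sum>i\<in>A. b i * y ^ s i)"
proof -
  have "(b i * y ^ s i) ^ q = b i * y ^ s i" if "i \<in> A" for i
    using assms(3)[OF that] assms(4)
    by (simp add: power_mult_distrib flip: power_mult) (simp add: mult.commute power_mult)
  then show ?thesis
    unfolding freshmans_dream_sum'[OF assms(1,2)] by (intro sum.cong) auto
qed

lemma involution_on_frobenius_shift:
  fixes h :: "'a::{field,finite} \<Rightarrow> 'a"
  assumes q: "q = 2 ^ m" and card: "card (UNIV :: 'a set) = q ^ 2"
    and "\<delta> ^ q = \<delta>" and h_fixed: "\<And>y. y ^ q = y \<Longrightarrow> h y ^ q = h y"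
  shows "involution_on UNIV (\<lambda>x. h (x ^ q + x + \<delta>) + x)"
proof -
  define T where "T x = x ^ q + x + \<delta>" for x
  have char: "CHAR('a) = 2"
    using CHAR_eq_2_if_card_eq_2_power card q by (metis power_mult)
  have frob_add: "(x + y) ^ q = x ^ q + y ^ q" for x y :: 'a
    by (rule freshmans_dream') (simp_all add: char q)
  have frob_frob: "(x ^ q) ^ q = x" for x :: 'a
    by (metis power_card_UNIV_eq_self card power2_eq_square power_mult)
  have T_fixed: "T x ^ q = T x" for x
    unfolding T_def using frob_add frob_frob \<open>\<delta> ^ q = \<delta>\<close> by (simp add: ac_simps)
  have T_shift: "T (z + x) = T x" if "z ^ q = z" for z x
  proof -
    have "T (z + x) = (z + z) + T x"
      unfolding T_def using frob_add that by (simp add: ac_simps)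
    then show ?thesis
      using uminus_CHAR_2[OF char] by (metis add.right_inverse add_0)
  qed
  have "T (h (T x) + x) = T x" for x
    using T_shift h_fixed T_fixed by blast
  then show ?thesis
    using involution_on_add_of_invariant[OF char, of T h] by (simp add: T_def)
qed

theorem theorem3p2:
  fixes q m k :: nat and b :: "nat \<Rightarrow> 'a::{field,finite}" and \<delta> :: 'a
    and s :: "nat \<Rightarrow> nat"
  assumes "q = 2 ^ m"
    and "card (UNIV :: 'a set) = q ^ 2"
    and "\<And>i. i \<in> {1..k} \<Longrightarrow> b i \<noteq> 0 \<and> b i ^ q = b i"
    and "\<delta> \<noteq> 0" and "\<delta> ^ q = \<delta>"
    and "\<And>i. i \<in> {1..k} \<Longrightarrow> s i > 0"
  shows "involution_on UNIV (\<lambda>x. (\<Sum>i=1..k. b i * (x ^ q + x + \<delta>) ^ s i) + x)"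
proof -
  have char: "CHAR('a) = 2"
    using CHAR_eq_2_if_card_eq_2_power assms(1,2) by (metis power_mult)
  have "(\<Sum>i=1..k. b i * y ^ s i) ^ q = (\<Sum>i=1..k. b i * y ^ s i)" if "y ^ q = y" for y
    using sum_mult_power_fixed_by_frobenius[of q m "{1..k}" b y s] char assms(1,3) that
    by simp
  then show ?thesis
    using involution_on_frobenius_shift[OF assms(1,2,5), of "\<lambda>y. \<Sum>i=1..k. b i * y ^ s i"]
    by simp
qed

end
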